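(* Let $n\ge 1$. Under the restriction map $H^\bullet(\Gamma_{n+1};\mathbb{Q}_{\mathrm{sgn}})\to H^\bullet(\Gamma_n;\mathbb{Q}_{\mathrm{sgn}})$ induced by the natural inclusion $\Gamma_n\hookrightarrow\Gamma_{n+1}$: if $\mathcal D\in\mathcal D^{\mathrm{sgn}}_{n+1}$ has exactly one isolated vertex, then $\alpha^{\mathrm{sgn}}_{\mathcal D}$ restricts to $\alpha^{\mathrm{sgn}}_{\mathcal D'}$, where $\mathcal D'\in\mathcal D^{\mathrm{sgn}}_n$ is obtained by deleting the isolated vertex; if $\mathcal D$ has no isolated vertex, $\alpha^{\mathrm{sgn}}_{\mathcal D}$ restricts to $0$. In particular the restriction map is injective on the subspace spanned by the classes $\alpha^{\mathrm{sgn}}_{\mathcal D}$ with $\mathcal D$ having exactly one isolated vertex.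
   Context: $\Gamma_n=\mathrm{Br}_n/[P_n,P_n]$, $\mathbb{Z}\mathcal A_n=P_n/[P_n,P_n]$. $\mathbb{Q}_{\mathrm{sgn}}$ is the sign representation of $S_n$ viewed as a $\Gamma_n$-module; $H^\bullet(\Gamma_n;\mathbb{Q}_{\mathrm{sgn}})$ is identified via restriction with $H^\bullet(\mathbb{Z}\mathcal A_n;\mathbb{Q}_{\mathrm{sgn}})^{S_n}$, and $H^\bullet(\mathbb{Z}\mathcal A_n;\mathbb{Q}_{\mathrm{sgn}})=\mathbb{Q}_{\mathrm{sgn}}\otimes\Lambda^\bullet$ where $\Lambda^\bullet$ is the exterior algebra on $\omega_{ij}$ ($1\le i<j\le n$) with $\sigma(\omega_{ij})=\omega_{\sigma(i)\sigma(j)}$ if $\sigma(i)<\sigma(j)$, $\omega_{\sigma(j)\sigma(i)}$ otherwise. The inclusion $\Gamma_n\hookrightarrow\Gamma_{n+1}$ comes from adding a strand; restriction sends $\omega_{ij}$ ($j\le n$) to $\omega_{ij}$ and $\omega_{i,n+1}$ to $0$. For a simple graph $\Delta$ on $\{1,\dots,n\}$ with lexicographically ordered edges $(i_1,j_1),\dots,(i_k,j_k)$, $\mu_\Delta=\omega_{i_1j_1}\cdots\omega_{i_kj_k}$. A graph with $n$ vertices is skew-invariant if every automorphism $\sigma$ satisfies $\mathrm{sgn}(\sigma)\mathrm{sgn}_\Delta(\sigma)=1$, with $\mathrm{sgn}(\sigma)$ the sign on vertices and $\mathrm{sgn}_\Delta(\sigma)$ the sign of the induced edge permutation; $\mathcal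 D^{\mathrm{sgn}}_n$ is the set of their isomorphism classes. Representatives are chosen coherently: for each class $\mathcal G_0$ without isolated vertices a representative on $\{1,\dots,|V\mathcal G_0|\}$ is fixed, and the representative $\Delta_{\mathcal D}$ of a class on $n$ vertices with non-isolated part $\mathcal G_0$ adds vertices $|V\mathcal G_0|+1,\dots,n$ as isolated vertices. $\alpha^{\mathrm{sgn}}_{\mathcal D}=\frac{1}{|\mathrm{Stab}_{S_n}(\Delta_{\mathcal D})|}\sum_{\sigma\in S_n}\sigma(\mu_{\Delta_{\mathcal D}})$ computed in $H^\bullet(\mathbb{Z}\mathcal A_n;\mathbb{Q}_{\mathrm{sgn}})$; these classes for $\mathcal D\in\mathcal D^{\mathrm{sgn}}_n$ form a basis of $H^\bullet(\Gamma_n;\mathbb{Q}_{\mathrm{sgn}})$. *)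

theory Defs
  imports Complex_Main "HOL-Combinatorics.Permutations"
begin

text \<open>Graphs are encoded by their edge sets: an edge is a pair (i,j) with 1 \<le> i < j.
  Vertices are 1..n. Elements of the exterior algebra on the generators omega_ij
  (1 \<le> i < j \<le> n) with rational coefficients are coefficient functions on
  edge sets S, S standing for the monomial mu_S (edges multiplied in lexicographic order).\<close>

definition edges :: "nat \<Rightarrow> (nat \<times> nat) set" where
  "edges n = {(i,j). 1 \<le> i \<and> i < j \<and> j \<le> n}"

definition simple_edges :: "(nat \<times> nat) set \<Rightarrow> bool" where
  "simple_edges E \<longleftrightarrow> finite E \<and> (\<forall>(i,j)\<in>E. 1 \<le> i \<and> i < j)"

definition verts :: "(nat \<times> nat) set \<Rightarrow> nat set" where
  "verts E = fst ` E \<union> snd ` E"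

definition emap :: "(nat \<Rightarrow> nat) \<Rightarrow> nat \<times> nat \<Rightarrow> nat \<times> nat" where
  "emap \<sigma> e = (min (\<sigma> (fst e)) (\<sigma> (snd e)), max (\<sigma> (fst e)) (\<sigma> (snd e)))"

definition lexless :: "nat \<times> nat \<Rightarrow> nat \<times> nat \<Rightarrow> bool" where
  "lexless e e' \<longleftrightarrow> fst e < fst e' \<or> (fst e = fst e' \<and> snd e < snd e')"

text \<open>number of inversions created when the lexicographically ordered edges of S are mapped by sigma;
  sigma(mu_S) = (-1)^inversions * mu_(sigma S) in the exterior algebra\<close>
definition inversions :: "(nat \<Rightarrow> nat) \<Rightarrow> (nat \<times> nat) set \<Rightarrow> nat" where
  "inversions \<sigma> S = card {(e,e'). e \<in> S \<and> e' \<in> S \<and> lexless e e' \<and> lexless (emap \<sigma> e') (emap \<sigma> e)}"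

definition perms :: "nat \<Rightarrow> (nat \<Rightarrow> nat) set" where
  "perms n = {\<sigma>. \<sigma> permutes {1..n}}"

definition stab :: "nat \<Rightarrow> (nat \<times> nat) set \<Rightarrow> (nat \<Rightarrow> nat) set" where
  "stab n E = {\<sigma> \<in> perms n. emap \<sigma> ` E = E}"

definition edge_perm :: "(nat \<Rightarrow> nat) \<Rightarrow> (nat \<times> nat) set \<Rightarrow> nat \<times> nat \<Rightarrow> nat \<times> nat" where
  "edge_perm \<sigma> E e = (if e \<in> E then emap \<sigma> e else e)"

definition skew_invariant :: "nat \<Rightarrow> (nat \<times> nat) set \<Rightarrow> bool" where
  "skew_invariant n E \<longleftrightarrow> E \<subseteq> edges n \<and>
     (\<forall>\<sigma> \<in> stab n E. sign \<sigma> * sign (edge_perm \<sigma> E) = 1)"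

text \<open>action of sigma in S_n on the basis element mu_S of Q_sgn tensor Lambda (diagonal action)\<close>
definition act_coeff :: "(nat \<Rightarrow> nat) \<Rightarrow> (nat \<times> nat) set \<Rightarrow> rat" where
  "act_coeff \<sigma> S = of_int (sign \<sigma>) * (-1) ^ inversions \<sigma> S"

text \<open>alpha^sgn for the representative graph with edge set S on n vertices,
  as an element of Q_sgn tensor Lambda (coefficient of mu_T)\<close>
definition alpha :: "nat \<Rightarrow> (nat \<times> nat) set \<Rightarrow> (nat \<times> nat) set \<Rightarrow> rat" where
  "alpha n S T = (1 / of_nat (card (stab n S))) *
     (\<Sum>\<sigma>\<in>perms n. if emap \<sigma> ` S = T then act_coeff \<sigma> S else 0)"

text \<open>restriction from n+1 strands to n strands: omega_ij \<mapsto> omega_ij (j \<le> n), omega_{i,n+1} \<mapsto> 0\<close>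
definition res :: "nat \<Rightarrow> ((nat \<times> nat) set \<Rightarrow> rat) \<Rightarrow> (nat \<times> nat) set \<Rightarrow> rat" where
  "res n f T = (if T \<subseteq> edges n then f T else 0)"

definition iso_graphs :: "(nat \<times> nat) set \<Rightarrow> (nat \<times> nat) set \<Rightarrow> bool" where
  "iso_graphs E F \<longleftrightarrow> (\<exists>f. bij_betw f (verts E) (verts F) \<and> emap f ` E = F)"

text \<open>coherent choice of representatives: to every graph without isolated vertices
  (given by its edge set) rep assigns a representative of its isomorphism class on the
  vertex set 1..k, depending only on the isomorphism class. The representative of a class
  on n vertices is then rep E with vertices k+1..n isolated (same edge set).\<close>
definition coherent_rep :: "((nat \<times> nat) set \<Rightarrow> (nat \<times> nat) set) \<Rightarrow> bool" where
  "coherent_rep rep \<longleftrightarrow> (\<forall>E. simple_edges E \<longrightarrow>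
      simple_edges (rep E) \<and> verts (rep E) = {1..card (verts E)} \<and> iso_graphs E (rep E) \<and>
      (\<forall>F. simple_edges F \<and> iso_graphs E F \<longrightarrow> rep F = rep E))"

end

(*
  Restriction sends every generator omega_(i,n+1) to 0, so a term sigma(mu_Delta) of alpha_D
  survives only if sigma maps every non-isolated vertex into {1..n}. Without isolated vertices
  this is impossible. With exactly one isolated vertex it forces sigma to fix n+1, and the
  surviving terms, together with the stabiliser, are exactly those of alpha_D'.
  For injectivity, the classes alpha_D with one isolated vertex live on pairwise distinct
  orbits of monomials that survive restriction, and alpha_D has coefficient 1 at mu_D itself:
  skew-invariance makes every automorphism fix mu_D, since the sign of the induced edge
  permutation is (-1) to the number of its lexicographic inversions.
*)

theory Submission
  imports Defs "HOL-Library.Product_Lexorder"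
begin

section \<open>Permutations\<close>

definition ordered_pairs :: "'a::linorder set \<Rightarrow> ('a \<times> 'a) set" where
  "ordered_pairs S = {(x, y). x \<in> S \<and> y \<in> S \<and> x < y}"

definition inversion_pairs :: "'a::linorder set \<Rightarrow> ('a \<Rightarrow> 'a) \<Rightarrow> ('a \<times> 'a) set" where
  "inversion_pairs S p = {(x, y). x \<in> S \<and> y \<in> S \<and> x < y \<and> p y < p x}"

definition pair_sign :: "'a::linorder set \<Rightarrow> ('a \<Rightarrow> 'a) \<Rightarrow> int" where
  "pair_sign S p = (\<Prod>(x, y)\<in>ordered_pairs S. if p x < p y then 1 else -1)"

lemma finite_ordered_pairs: "finite S \<Longrightarrow> finite (ordered_pairs S)"
  by (rule finite_subset[of _ "S \<times> S"]) (auto simp: ordered_pairs_def)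

lemma pair_sign_eq_inversion_pairs:
  assumes "finite S" "inj_on p S"
  shows "pair_sign S p = (-1) ^ card (inversion_pairs S p)"
proof -
  have "pair_sign S p = (\<Prod>z\<in>ordered_pairs S. if z \<in> inversion_pairs S p then -1 else 1)"
    unfolding pair_sign_def
  proof (rule prod.cong)
    fix z assume "z \<in> ordered_pairs S"
    then obtain x y where "z = (x, y)" "x \<in> S" "y \<in> S" "x < y"
      by (auto simp: ordered_pairs_def)
    moreover have "p x \<noteq> p y"
      using calculation assms(2) by (metis inj_on_eq_iff less_irrefl)
    ultimately show "(case z of (x, y) \<Rightarrow> if p x < p y then 1 else -1) =
        (if z \<in> inversion_pairs S p then -1 else (1::int))"
      by (auto simp: inversion_pairs_def)
  qed simp
  also have "\<dots> = (-1) ^ card {z\<in>ordered_pairs S. z \<in> inversion_pairs S p}"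
    by (simp add: prod.If_cases Int_def finite_ordered_pairs assms(1))
  also have "{z\<in>ordered_pairs S. z \<in> inversion_pairs S p} = inversion_pairs S p"
    by (auto simp: ordered_pairs_def inversion_pairs_def)
  finally show ?thesis by simp
qed

lemma min_max_doubleton: "{min a b, max a b} = {a, b}"
  by (auto simp: min_def max_def)

lemma pair_sign_compose:
  assumes "finite S" "q permutes S" "inj_on p S"
  shows "pair_sign S (p \<circ> q) = pair_sign S p * pair_sign S q"
proof -
  \<comment> \<open>Sorting the image pair (q x, q y) permutes the ordered pairs of S, and the factor of
    p \<circ> q at (x, y) is the factor of q there times the factor of p at the sorted pair.\<close>
  define sort_image where "sort_image = (\<lambda>(x, y). (min (q x) (q y), max (q x) (q y)))"
  define sgn_p where "sgn_p = (\<lambda>(u, v). if p u < p v then 1 else -1 :: int)"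
  have inj_q: "inj q" using assms(2) by (rule permutes_inj)
  have q_S: "q x \<in> S \<longleftrightarrow> x \<in> S" for x using assms(2) by (rule permutes_in_image)
  have into: "sort_image ` ordered_pairs S \<subseteq> ordered_pairs S"
  proof clarsimp
    fix x y assume "(x, y) \<in> ordered_pairs S"
    then have "q x \<noteq> q y" "x \<in> S" "y \<in> S" using inj_q by (auto simp: ordered_pairs_def inj_eq)
    then show "sort_image (x, y) \<in> ordered_pairs S"
      by (auto simp: sort_image_def ordered_pairs_def q_S min_def max_def)
  qed
  have "inj_on sort_image (ordered_pairs S)"
  proof (rule inj_onI, clarsimp simp: ordered_pairs_def)
    fix x y x' y'
    assume "x < y" "x' < y'" and eq: "sort_image (x, y) = sort_image (x', y')"
    have "q ` {x, y} = q ` {x', y'}"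
      using eq min_max_doubleton[of "q x" "q y"] min_max_doubleton[of "q x'" "q y'"]
      by (simp add: sort_image_def)
    then have "{x, y} = {x', y'}" using inj_q by (metis inj_image_eq_iff)
    then show "x = x' \<and> y = y'" using \<open>x < y\<close> \<open>x' < y'\<close> by (auto simp: doubleton_eq_iff)
  qed
  then have bij: "bij_betw sort_image (ordered_pairs S) (ordered_pairs S)"
    using endo_inj_surj[OF finite_ordered_pairs[OF assms(1)] into] by (simp add: bij_betw_def)
  have split_sign: "(if p (q x) < p (q y) then 1 else -1) =
      (if q x < q y then 1 else -1) * sgn_p (sort_image (x, y))"
    if "(x, y) \<in> ordered_pairs S" for x y
  proof -
    have "q x \<noteq> q y" "p (q x) \<noteq> p (q y)"
      using that inj_q assms(3) q_S by (auto simp: ordered_pairs_def inj_eq inj_on_eq_iff)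
    then show ?thesis by (auto simp: sgn_p_def sort_image_def min_def max_def)
  qed
  have "pair_sign S (p \<circ> q) =
      (\<Prod>(x, y)\<in>ordered_pairs S. (if q x < q y then 1 else -1) * sgn_p (sort_image (x, y)))"
    unfolding pair_sign_def by (rule prod.cong) (auto simp: split_sign)
  also have "\<dots> = pair_sign S q * (\<Prod>z\<in>ordered_pairs S. sgn_p (sort_image z))"
    unfolding pair_sign_def by (simp add: case_prod_beta prod.distrib)
  also have "(\<Prod>z\<in>ordered_pairs S. sgn_p (sort_image z)) = pair_sign S p"
    unfolding pair_sign_def sgn_p_def using prod.reindex_bij_betw[OF bij] by simp
  finally show ?thesis by (simp add: comp_def mult.commute)
qed

lemma pair_sign_transpose:
  assumes "finite S" "a \<in> S" "b \<in> S" "a < b"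
  shows "pair_sign S (Transposition.transpose a b) = -1"
proof -
  define between where "between = {z\<in>S. a < z \<and> z < b}"
  have "inversion_pairs S (Transposition.transpose a b) =
      insert (a, b) ((\<lambda>z. (a, z)) ` between \<union> (\<lambda>z. (z, b)) ` between)"
    using assms(2-4) by (auto simp: inversion_pairs_def between_def Transposition.transpose_def
        split: if_splits)
  moreover have "card \<dots> = Suc (card ((\<lambda>z. (a, z)) ` between) + card ((\<lambda>z. (z, b)) ` between))"
  proof -
    have "finite between" using assms(1) by (simp add: between_def)
    moreover have "(a, b) \<notin> (\<lambda>z. (a, z)) ` between \<union> (\<lambda>z. (z, b)) ` between"
      by (auto simp: between_def)
    moreover have "(\<lambda>z. (a, z)) ` between \<inter> (\<lambda>z. (z, b)) ` between = {}"
      by (auto simp: between_def)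
    ultimately show ?thesis by (simp add: card_Un_disjoint)
  qed
  moreover have "card ((\<lambda>z. (a, z)) ` between) = card between"
    "card ((\<lambda>z. (z, b)) ` between) = card between"
    by (simp_all add: card_image inj_on_def)
  ultimately show ?thesis
    using assms by (simp add: pair_sign_eq_inversion_pairs)
qed

lemma sign_eq_pair_sign:
  assumes "p permutes S" "finite S"
  shows "sign p = pair_sign S p"
  using assms
proof (induction rule: permutes_induct)
  case id
  show ?case by (simp add: pair_sign_def ordered_pairs_def prod.neutral)
next
  case (swap a b p)
  have transpose_sign: "pair_sign S (Transposition.transpose a b) = -1"
    using swap(1-3) assms(2) pair_sign_transpose[of S a b] pair_sign_transpose[of S b a]
    by (cases "a < b") (auto simp: transpose_commute)
  have "sign (Transposition.transpose a b \<circ> p) = - sign p"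
    using swap(1-4) assms(2)
    by (simp add: sign_compose permutation_swap_id permutes_imp_permutation sign_swap_id)
  moreover have "pair_sign S (Transposition.transpose a b \<circ> p) = - pair_sign S p"
    using pair_sign_compose[OF assms(2) swap(4), of "Transposition.transpose a b"] transpose_sign
      permutes_inj_on[OF permutes_swap_id[OF swap(1,2)]] by simp
  ultimately show ?case using swap(5) by metis
qed

lemma sign_eq_inversion_pairs:
  assumes "p permutes S" "finite S"
  shows "sign p = (-1) ^ card (inversion_pairs S p)"
  using sign_eq_pair_sign[OF assms]
    pair_sign_eq_inversion_pairs[OF assms(2) permutes_inj_on[OF assms(1)]] by simp

lemma permutes_shrink_insert:
  assumes "\<sigma> permutes insert a B" "finite B" "\<sigma> ` B \<subseteq> B"
  shows "\<sigma> permutes B"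
proof (cases "a \<in> B")
  case True
  then show ?thesis using assms(1) by (simp add: insert_absorb)
next
  case False
  have inj: "inj \<sigma>" using assms(1) by (rule permutes_inj)
  have "\<sigma> ` B = B" using endo_inj_surj[OF assms(2,3)] inj_on_subset[OF inj] by blast
  moreover have "\<sigma> a \<in> insert a B" using permutes_in_image[OF assms(1), of a] by simp
  ultimately have "\<sigma> a = a" using False inj by (metis imageE inj_eq insertE)
  then show ?thesis using assms(1) by (auto simp: permutes_def)
qed

lemma bij_betw_extends_to_permutes:
  assumes "finite A" "X \<subseteq> A" "Y \<subseteq> A" "bij_betw f X Y"
  obtains g where "g permutes A" "\<And>x. x \<in> X \<Longrightarrow> g x = f x"
proof -
  have "card (A - X) = card (A - Y)"
    using assms by (simp add: card_Diff_subset bij_betw_same_card finite_subset)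
  then obtain h where h: "bij_betw h (A - X) (A - Y)"
    using finite_same_card_bij assms(1) by blast
  define g where "g x = (if x \<in> X then f x else if x \<in> A then h x else x)" for x
  have "bij_betw g X Y"
    using assms(4) by (rule bij_betw_cong[THEN iffD1, rotated]) (simp add: g_def)
  moreover have "bij_betw g (A - X) (A - Y)"
    using h by (rule bij_betw_cong[THEN iffD1, rotated]) (simp add: g_def)
  ultimately have "bij_betw g (X \<union> (A - X)) (Y \<union> (A - Y))"
    by (rule bij_betw_combine) blast
  then have "g permutes A"
    using assms(2,3) by (intro bij_imp_permutes) (auto simp: g_def Un_absorb1)
  then show ?thesis using that g_def by simp
qed

section \<open>Edge maps and relabelling of graphs\<close>

lemma emap_comp: "emap \<sigma> (emap \<tau> e) = emap (\<sigma> \<circ> \<tau>) e"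
  by (cases "\<tau> (fst e) \<le> \<tau> (snd e)") (auto simp: emap_def min_def max_def)

lemma emap_id: "fst e < snd e \<Longrightarrow> emap id e = e"
  by (cases e) (auto simp: emap_def)

lemma simple_edges_fst_less_snd: "simple_edges E \<Longrightarrow> e \<in> E \<Longrightarrow> fst e < snd e"
  by (auto simp: simple_edges_def)

lemma image_emap_id: "simple_edges E \<Longrightarrow> emap id ` E = E"
  by (auto simp: emap_id simple_edges_fst_less_snd image_iff)

lemma emap_doubleton: "{fst (emap \<sigma> e), snd (emap \<sigma> e)} = \<sigma> ` {fst e, snd e}"
  by (auto simp: emap_def min_def max_def)

lemma verts_eq_UN: "verts E = (\<Union>e\<in>E. {fst e, snd e})"
  by (auto simp: verts_def)

lemma verts_image_emap: "verts (emap \<sigma> ` E) = \<sigma> ` verts E"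
  by (simp add: verts_eq_UN emap_doubleton image_UN)

lemma inj_on_emap: "inj \<sigma> \<Longrightarrow> inj_on (emap \<sigma>) {e. fst e < snd e}"
proof (rule inj_onI)
  fix e e' assume "inj \<sigma>" "e \<in> {e. fst e < snd e}" "e' \<in> {e. fst e < snd e}"
    and "emap \<sigma> e = emap \<sigma> e'"
  then have "{fst e, snd e} = {fst e', snd e'}"
    using emap_doubleton[of \<sigma> e] emap_doubleton[of \<sigma> e'] by (metis inj_image_eq_iff)
  with \<open>e \<in> _\<close> \<open>e' \<in> _\<close> show "e = e'" by (cases e, cases e') (auto simp: doubleton_eq_iff)
qed

lemma finite_edges: "finite (edges n)"
  by (rule finite_subset[of _ "{1..n} \<times> {1..n}"]) (auto simp: edges_def)

lemma simple_edges_if_subset_edges: "E \<subseteq> edges n \<Longrightarrow> simple_edges E"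
  unfolding simple_edges_def using finite_subset[OF _ finite_edges] by (auto simp: edges_def)

lemma subset_edges_iff_verts: "simple_edges E \<Longrightarrow> E \<subseteq> edges n \<longleftrightarrow> verts E \<subseteq> {1..n}"
  by (auto simp: verts_def edges_def simple_edges_def)

lemma emap_in_edges:
  assumes "\<sigma> permutes {1..n}" "e \<in> edges n"
  shows "emap \<sigma> e \<in> edges n"
proof -
  have "\<sigma> (fst e) \<noteq> \<sigma> (snd e)"
    using assms permutes_inj[OF assms(1)] by (auto simp: edges_def inj_eq)
  then show ?thesis
    using assms permutes_in_seg[OF assms(1)] by (auto simp: edges_def emap_def min_def max_def)
qed

lemma edge_perm_permutes:
  assumes "inj \<sigma>" "emap \<sigma> ` E = E" "simple_edges E"
  shows "edge_perm \<sigma> E permutes E"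
proof (rule bij_imp_permutes)
  have "inj_on (emap \<sigma>) E"
    using inj_on_emap[OF assms(1)] simple_edges_fst_less_snd[OF assms(3)] inj_on_subset by blast
  then show "bij_betw (edge_perm \<sigma> E) E E"
    using assms(2) by (simp add: bij_betw_def edge_perm_def cong: image_cong inj_on_cong)
qed (simp add: edge_perm_def)

lemma stab_Suc_eq:
  assumes "verts S = {1..n}"
  shows "stab (Suc n) S = stab n S"
proof
  show "stab n S \<subseteq> stab (Suc n) S"
    by (auto simp: stab_def perms_def intro: permutes_subset)
  show "stab (Suc n) S \<subseteq> stab n S"
  proof
    fix \<sigma> assume "\<sigma> \<in> stab (Suc n) S"
    then have \<sigma>: "\<sigma> permutes insert (Suc n) {1..n}" "emap \<sigma> ` S = S"
      by (auto simp: stab_def perms_def atLeastAtMostSuc_conv)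
    then have "\<sigma> ` {1..n} = {1..n}" using verts_image_emap[of \<sigma> S] assms by simp
    then show "\<sigma> \<in> stab n S"
      using permutes_shrink_insert[OF \<sigma>(1)] \<sigma>(2) by (simp add: stab_def perms_def)
  qed
qed

lemma simple_edges_if_skew_invariant: "skew_invariant N E \<Longrightarrow> simple_edges E"
  by (meson simple_edges_if_subset_edges skew_invariant_def)

lemma skew_invariant_Suc_iff:
  assumes "simple_edges S" "verts S = {1..n}"
  shows "skew_invariant (Suc n) S \<longleftrightarrow> skew_invariant n S"
  using assms by (simp add: skew_invariant_def stab_Suc_eq subset_edges_iff_verts)

lemma edge_perm_relabel:
  assumes "inj_on (emap g) E" "emap \<tau> ` E = E"
    and "\<And>e. e \<in> E \<Longrightarrow> emap g (emap \<tau> e) = emap \<sigma> (emap g e)"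
  shows "edge_perm \<sigma> (emap g ` E) = map_permutation E (emap g) (edge_perm \<tau> E)"
proof
  fix x
  show "edge_perm \<sigma> (emap g ` E) x = map_permutation E (emap g) (edge_perm \<tau> E) x"
  proof (cases "x \<in> emap g ` E")
    case True
    then obtain e where "e \<in> E" "x = emap g e" by auto
    moreover have "emap \<tau> e \<in> E" using \<open>e \<in> E\<close> assms(2) by auto
    ultimately show ?thesis using assms(1,3)
      by (simp add: map_permutation_def restrict_id_def edge_perm_def inv_into_f_f)
  qed (simp add: map_permutation_def restrict_id_def edge_perm_def)
qed

lemma skew_invariant_relabel:
  assumes g: "g permutes {1..N}" and skew: "skew_invariant N E"
  shows "skew_invariant N (emap g ` E)"
  unfolding skew_invariant_def
proof (intro conjI ballI)
  have E: "E \<subseteq> edges N" "simple_edges E"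
    using skew simple_edges_if_subset_edges by (auto simp: skew_invariant_def)
  then show "emap g ` E \<subseteq> edges N" using emap_in_edges[OF g] by auto
  fix \<sigma> assume "\<sigma> \<in> stab N (emap g ` E)"
  then have \<sigma>: "\<sigma> permutes {1..N}" "emap \<sigma> ` emap g ` E = emap g ` E"
    by (auto simp: stab_def perms_def)
  \<comment> \<open>The conjugate \<tau> is an automorphism of E with the same vertex sign, and its edge
    permutation is conjugate to that of \<sigma> via emap g.\<close>
  define \<tau> where "\<tau> = inv g \<circ> \<sigma> \<circ> g"
  have \<tau>: "\<tau> permutes {1..N}" unfolding \<tau>_def by (intro permutes_compose permutes_inv g \<sigma>(1))
  have inv_g: "inv g \<circ> g = id" "g \<circ> inv g = id" using permutes_inv_o[OF g] by auto
  have inj_emap_g: "inj_on (emap g) E"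
    using inj_on_emap[OF permutes_inj[OF g]] simple_edges_fst_less_snd[OF E(2)] inj_on_subset by blast
  have "emap \<tau> ` E = emap (inv g) ` emap \<sigma> ` emap g ` E"
    by (simp add: image_image emap_comp \<tau>_def o_assoc)
  also have "\<dots> = E"
    using \<sigma>(2) simple_edges_fst_less_snd[OF E(2)] by (simp add: image_image emap_comp inv_g emap_id)
  finally have \<tau>_E: "emap \<tau> ` E = E" .
  then have "sign \<tau> * sign (edge_perm \<tau> E) = 1"
    using skew \<tau> by (simp add: skew_invariant_def stab_def perms_def)
  moreover have "sign \<tau> = sign \<sigma>"
    using permutes_imp_permutation[OF _ g] permutes_imp_permutation[OF _ \<sigma>(1)]
    by (simp add: \<tau>_def sign_compose permutation_compose permutation_inverse sign_inverse)
  moreover have "edge_perm \<sigma> (emap g ` E) = map_permutation E (emap g) (edge_perm \<tau> E)"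
    by (rule edge_perm_relabel[OF inj_emap_g \<tau>_E]) (simp add: emap_comp \<tau>_def o_assoc inv_g)
  then have "sign (edge_perm \<sigma> (emap g ` E)) = sign (edge_perm \<tau> E)"
    using sign_map_permutation[OF inj_emap_g edge_perm_permutes[OF permutes_inj[OF \<tau>] \<tau>_E E(2)]] E(2)
    by (simp add: simple_edges_def)
  ultimately show "sign \<sigma> * sign (edge_perm \<sigma> (emap g ` E)) = 1" by simp
qed

lemma coherent_repD:
  assumes "coherent_rep rep" "simple_edges E"
  shows "simple_edges (rep E)" "verts (rep E) = {1..card (verts E)}" "iso_graphs E (rep E)"
  using assms unfolding coherent_rep_def by blast+

lemma rep_eq_if_iso:
  assumes "coherent_rep rep" "simple_edges E" "simple_edges F" "iso_graphs E F"
  shows "rep F = rep E"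
  using assms unfolding coherent_rep_def by blast

lemma rep_rep: "coherent_rep rep \<Longrightarrow> simple_edges E \<Longrightarrow> rep (rep E) = rep E"
  by (simp add: rep_eq_if_iso coherent_repD)

lemma iso_graphs_relabel:
  assumes "inj \<sigma>"
  shows "iso_graphs E (emap \<sigma> ` E)"
  unfolding iso_graphs_def verts_image_emap
  using inj_on_subset[OF assms] by (auto simp: bij_betw_def)

lemma skew_invariant_rep:
  assumes rep: "coherent_rep rep" and skew: "skew_invariant N E"
  shows "skew_invariant N (rep E)"
proof -
  have E: "simple_edges E" "verts E \<subseteq> {1..N}"
    using skew simple_edges_if_skew_invariant[OF skew] subset_edges_iff_verts[of E N]
    by (simp_all add: skew_invariant_def)
  obtain f where f: "bij_betw f (verts E) (verts (rep E))" "emap f ` E = rep E"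
    using coherent_repD(3)[OF rep E(1)] by (auto simp: iso_graphs_def)
  have "card (verts E) \<le> N" using card_mono[OF _ E(2)] by simp
  then have "verts (rep E) \<subseteq> {1..N}" using coherent_repD(2)[OF rep E(1)] by simp
  then obtain g where g: "g permutes {1..N}" "\<And>x. x \<in> verts E \<Longrightarrow> g x = f x"
    using bij_betw_extends_to_permutes[OF _ E(2) _ f(1)] by blast
  have "emap g ` E = rep E"
    unfolding f(2)[symmetric] by (rule image_cong) (auto simp: emap_def g(2) verts_def)
  then show ?thesis using skew_invariant_relabel[OF g(1) skew] by simp
qed

lemma rep_with_one_isolated_vertex:
  assumes rep: "coherent_rep rep" and E: "skew_invariant (Suc n) E" "card (verts E) = n"
  shows "rep (rep E) = rep E" "simple_edges (rep E)" "verts (rep E) = {1..n}"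
    "rep E \<subseteq> edges n" "skew_invariant (Suc n) (rep E)" "skew_invariant n (rep E)"
proof -
  show "rep (rep E) = rep E" "simple_edges (rep E)" "verts (rep E) = {1..n}"
    using rep_rep[OF rep] coherent_repD[OF rep] simple_edges_if_skew_invariant[OF E(1)] E(2)
    by simp_all
  then show "rep E \<subseteq> edges n" by (simp add: subset_edges_iff_verts)
  show "skew_invariant (Suc n) (rep E)" using skew_invariant_rep[OF rep E(1)] .
  then show "skew_invariant n (rep E)"
    using skew_invariant_Suc_iff \<open>simple_edges (rep E)\<close> \<open>verts (rep E) = {1..n}\<close> by blast
qed

lemma finite_skew_invariant: "finite {E. skew_invariant N E}"
  by (rule finite_subset[of _ "Pow (edges N)"]) (auto simp: skew_invariant_def finite_edges)

section \<open>The classes alpha under restriction\<close>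

lemma act_coeff_stab:
  assumes "skew_invariant N G" "\<sigma> \<in> stab N G"
  shows "act_coeff \<sigma> G = 1"
proof -
  have G: "simple_edges G" "finite G"
    using simple_edges_if_skew_invariant[OF assms(1)] by (auto simp: simple_edges_def)
  have \<sigma>: "\<sigma> permutes {1..N}" "emap \<sigma> ` G = G" using assms(2) by (auto simp: stab_def perms_def)
  have "inversions \<sigma> G = card (inversion_pairs G (edge_perm \<sigma> G))"
    unfolding inversions_def inversion_pairs_def lexless_def less_prod_def'
    by (rule arg_cong[where f = card]) (auto simp: edge_perm_def)
  then have "sign (edge_perm \<sigma> G) = (-1) ^ inversions \<sigma> G"
    using sign_eq_inversion_pairs[OF edge_perm_permutes[OF permutes_inj[OF \<sigma>(1)] \<sigma>(2) G(1)] G(2)]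
    by simp
  moreover have "sign \<sigma> * sign (edge_perm \<sigma> G) = 1"
    using assms by (simp add: skew_invariant_def)
  ultimately have "of_int (sign \<sigma> * (-1) ^ inversions \<sigma> G) = (1::rat)" by simp
  then show ?thesis by (simp add: act_coeff_def)
qed

lemma alpha_self:
  assumes "skew_invariant N G"
  shows "alpha N G G = 1"
proof -
  have "id \<in> stab N G"
    unfolding stab_def perms_def using image_emap_id[OF simple_edges_if_skew_invariant[OF assms]]
    by (blast intro: permutes_id)
  moreover have "finite (stab N G)"
    unfolding stab_def perms_def using finite_permutations[of "{1..N}"] by simp
  ultimately have "card (stab N G) \<noteq> 0" by auto
  moreover have "(\<Sum>\<sigma>\<in>perms N. if emap \<sigma> ` G = G then act_coeff \<sigma> G else 0) =
      (\<Sum>\<sigma>\<in>stab N G. act_coeff \<sigma> G)"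
    unfolding stab_def by (rule sum.inter_filter[symmetric]) (simp add: perms_def finite_permutations)
  moreover have "(\<Sum>\<sigma>\<in>stab N G. act_coeff \<sigma> G) = of_nat (card (stab N G))"
    using act_coeff_stab[OF assms] by simp
  ultimately show ?thesis by (simp add: alpha_def)
qed

lemma alpha_eq_0_off_orbit: "(\<And>\<sigma>. \<sigma> \<in> perms N \<Longrightarrow> emap \<sigma> ` G \<noteq> T) \<Longrightarrow> alpha N G T = 0"
  by (simp add: alpha_def)

lemma alpha_rep_fixed_eq_delta:
  assumes rep: "coherent_rep rep" and G: "simple_edges G" "rep G = G"
    and H: "skew_invariant N H" "rep H = H"
  shows "alpha N G H = (if G = H then 1 else 0)"
proof (cases "G = H")
  case True
  then show ?thesis using alpha_self[OF H(1)] by simp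
next
  case False
  have "emap \<sigma> ` G \<noteq> H" if "\<sigma> \<in> perms N" for \<sigma>
  proof
    assume "emap \<sigma> ` G = H"
    then have "iso_graphs G H"
      using iso_graphs_relabel permutes_inj that by (fastforce simp: perms_def)
    then have "rep H = rep G"
      using rep_eq_if_iso[OF rep G(1) simple_edges_if_skew_invariant[OF H(1)]] by simp
    then show False using False G(2) H(2) by simp
  qed
  then show ?thesis using False by (simp add: alpha_eq_0_off_orbit)
qed

lemma alpha_eq_0_if_not_subset_edges:
  assumes "S \<subseteq> edges n" "\<not> T \<subseteq> edges n"
  shows "alpha n S T = 0"
  using assms emap_in_edges by (intro alpha_eq_0_off_orbit) (auto simp: perms_def)

lemma res_alpha_Suc:
  assumes S: "simple_edges S" "verts S = {1..n}"
  shows "res n (alpha (Suc n) S) = alpha n S"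
proof
  fix T
  have S_edges: "S \<subseteq> edges n" using S subset_edges_iff_verts by simp
  show "res n (alpha (Suc n) S) T = alpha n S T"
  proof (cases "T \<subseteq> edges n")
    case False
    then show ?thesis using alpha_eq_0_if_not_subset_edges[OF S_edges] by (simp add: res_def)
  next
    case True
    have "\<sigma> \<in> perms n" if \<sigma>: "\<sigma> \<in> perms (Suc n)" "emap \<sigma> ` S = T" for \<sigma>
    proof -
      have "\<sigma> ` {1..n} = verts T" using verts_image_emap[of \<sigma> S] S(2) \<sigma>(2) by simp
      also have "\<dots> \<subseteq> {1..n}"
        using True subset_edges_iff_verts[OF simple_edges_if_subset_edges[OF True]] by simp
      finally show ?thesis
        using permutes_shrink_insert[of \<sigma> "Suc n" "{1..n}"] \<sigma>(1)
        by (simp add: perms_def atLeastAtMostSuc_conv)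
    qed
    then have "(\<Sum>\<sigma>\<in>perms (Suc n). if emap \<sigma> ` S = T then act_coeff \<sigma> S else 0) =
        (\<Sum>\<sigma>\<in>perms n. if emap \<sigma> ` S = T then act_coeff \<sigma> S else 0)"
      by (intro sum.mono_neutral_right) (auto simp: perms_def finite_permutations permutes_subset)
    then show ?thesis using True by (simp add: res_def alpha_def stab_Suc_eq[OF S(2)])
  qed
qed

lemma res_alpha_Suc_eq_0:
  assumes "verts S = {1..Suc n}"
  shows "res n (alpha (Suc n) S) = (\<lambda>T. 0)"
proof
  fix T
  have "emap \<sigma> ` S \<noteq> T" if "\<sigma> \<in> perms (Suc n)" "T \<subseteq> edges n" for \<sigma>
  proof
    assume "emap \<sigma> ` S = T"
    then have "verts T = {1..Suc n}"
      using verts_image_emap[of \<sigma> S] assms permutes_image that(1) by (simp add: perms_def)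
    moreover have "verts T \<subseteq> {1..n}"
      using that(2) subset_edges_iff_verts[OF simple_edges_if_subset_edges[OF that(2)]] by simp
    ultimately show False by auto
  qed
  then show "res n (alpha (Suc n) S) T = 0" by (simp add: res_def alpha_eq_0_off_orbit)
qed

lemma coeff_eq_0_if_res_alpha_combination_eq_0:
  assumes rep: "coherent_rep rep" and R: "finite R"
    and R_reps: "\<And>G. G \<in> R \<Longrightarrow> rep G = G \<and> skew_invariant (Suc n) G \<and> G \<subseteq> edges n"
    and zero: "res n (\<lambda>T. \<Sum>G\<in>R. c G * alpha (Suc n) G T) = (\<lambda>T. 0)"
    and "H \<in> R"
  shows "c H = 0"
proof -
  have H: "rep H = H" "skew_invariant (Suc n) H" "H \<subseteq> edges n" using R_reps \<open>H \<in> R\<close> by auto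
  have "0 = res n (\<lambda>T. \<Sum>G\<in>R. c G * alpha (Suc n) G T) H" using zero by simp
  also have "\<dots> = (\<Sum>G\<in>R. c G * alpha (Suc n) G H)" using H(3) by (simp add: res_def)
  also have "\<dots> = (\<Sum>G\<in>R. if G = H then c G else 0)"
  proof (rule sum.cong)
    fix G assume "G \<in> R"
    then have "simple_edges G" "rep G = G" using R_reps simple_edges_if_skew_invariant by blast+
    then show "c G * alpha (Suc n) G H = (if G = H then c G else 0)"
      using alpha_rep_fixed_eq_delta[OF rep _ _ H(2,1)] by simp
  qed simp
  also have "\<dots> = c H" using R \<open>H \<in> R\<close> by simp
  finally show ?thesis by simp
qed

theorem proposition2p22:
  fixes n :: nat and rep :: "(nat \<times> nat) set \<Rightarrow> (nat \<times> nat) set"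
  assumes "n \<ge> 1" and "coherent_rep rep"
  shows "(\<forall>E. skew_invariant (Suc n) E \<and> card (verts E) = n \<longrightarrow>
            skew_invariant n (rep E) \<and>
            res n (alpha (Suc n) (rep E)) = alpha n (rep E))
       \<and> (\<forall>E. skew_invariant (Suc n) E \<and> card (verts E) = Suc n \<longrightarrow>
            res n (alpha (Suc n) (rep E)) = (\<lambda>T. 0))
       \<and> (\<forall>c :: (nat \<times> nat) set \<Rightarrow> rat.
            let R = rep ` {E. skew_invariant (Suc n) E \<and> card (verts E) = n};
                v = (\<lambda>T. \<Sum>G\<in>R. c G * alpha (Suc n) G T)
            in res n v = (\<lambda>T. 0) \<longrightarrow> v = (\<lambda>T. 0))"
proof -
  note rep = assms(2)
  have one_isolated: "skew_invariant n (rep E) \<and> res n (alpha (Suc n) (rep E)) = alpha n (rep E)"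
    if "skew_invariant (Suc n) E" "card (verts E) = n" for E
    using rep_with_one_isolated_vertex[OF rep that] res_alpha_Suc by simp
  have no_isolated: "res n (alpha (Suc n) (rep E)) = (\<lambda>T. 0)"
    if "skew_invariant (Suc n) E" "card (verts E) = Suc n" for E
    using coherent_repD(2)[OF rep simple_edges_if_skew_invariant[OF that(1)]] that(2)
    by (simp add: res_alpha_Suc_eq_0)
  have independent: "(\<lambda>T. \<Sum>G\<in>R. c G * alpha (Suc n) G T) = (\<lambda>T. 0)"
    if R: "R = rep ` {E. skew_invariant (Suc n) E \<and> card (verts E) = n}"
      and zero: "res n (\<lambda>T. \<Sum>G\<in>R. c G * alpha (Suc n) G T) = (\<lambda>T. 0)" for R c
  proof -
    have "finite R"
      unfolding R using finite_subset[OF _ finite_skew_invariant[of "Suc n"]] by auto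
    moreover have "rep G = G \<and> skew_invariant (Suc n) G \<and> G \<subseteq> edges n" if "G \<in> R" for G
      using that rep_with_one_isolated_vertex[OF rep] unfolding R by blast
    ultimately have "c G = 0" if "G \<in> R" for G
      using coeff_eq_0_if_res_alpha_combination_eq_0[OF rep _ _ zero that] by blast
    then show ?thesis by simp
  qed
  show ?thesis using one_isolated no_isolated independent by (simp add: Let_def)
qed

end
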